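(* Assume $X$ is a subordinator satisfying (L), with drift $\delta\ge0$ and Lévy measure $\Pi$, so that $\psi(\lambda)=-\delta\lambda-\int_0^\infty(1-e^{-\lambda r})\Pi(dr)$. Then $$-m(\lambda)=\frac{\delta}{c}\lambda+\int_0^\infty(1-e^{-\lambda r})\frac{\bar\Pi(r)}{cr}\,dr,\qquad\lambda\ge0,$$ where $\bar\Pi(y)=\Pi((y,\infty))$, and the equation $\int_0^\infty e^{-\lambda r}\nu(dr)=\exp(m(\lambda))$, $\lambda\ge0$, defines a unique probability measure $\nu$ on $(0,\infty)$. This $\nu$ is infinitely divisible and $\nu((\delta/c,\infty))=1$.
   Context: Continuous setting. $c>0$ and $X$ is a real Lévy process with no negative jumps, with Lévy exponent $\psi$ defined by $\mathbb E(e^{-\lambda X_t})=e^{t\psi(\lambda)}$, $t,\lambda\ge0$; $\psi(\lambda)=\alpha\lambda+\frac\gamma2\lambda^2+\int_0^\infty(e^{-\lambda r}-1+\lambda r\mathbf 1_{r<1})\Pi(dr)$ with $\alpha\in\mathbb R$, $\gamma\ge0$, $\Pi$ a measure on $(0,\infty)$ with $\int(1\wedge r^2)\Pi(dr)<\infty$. Condition (L): $\int_1^\infty\log(r)\,\Pi(dr)<\infty$. Under (L), $m(\lambda)=\int_0^\lambda\frac{\psi(s)}{cs}\,ds$, $\lambda\ge0$. *)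

theory Defs
  imports "HOL-Probability.Probability" "HOL-Probability.Convolution"
begin

definition sub_psi :: "real \<Rightarrow> real measure \<Rightarrow> real \<Rightarrow> real" where
  "sub_psi d LM lam = - d * lam - (\<integral> r. (1 - exp (- lam * r)) \<partial>LM)"

definition m_fun :: "real \<Rightarrow> (real \<Rightarrow> real) \<Rightarrow> real \<Rightarrow> real" where
  "m_fun c psi lam = (LBINT s:{0..lam}. psi s / (c * s))"

definition Pi_bar :: "real measure \<Rightarrow> real \<Rightarrow> real" where
  "Pi_bar LM y = measure LM {y<..}"

fun conv_power :: "real measure \<Rightarrow> nat \<Rightarrow> real measure" where
  "conv_power mu 0 = return borel 0"
| "conv_power mu (Suc n) = convolution mu (conv_power mu n)"

definition inf_divisible :: "real measure \<Rightarrow> bool" where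
  "inf_divisible nu \<longleftrightarrow> (\<forall>n::nat\<ge>1. \<exists>mu. prob_space mu \<and> sets mu = sets borel \<and> conv_power mu n = nu)"

end

theory Submission
  imports Defs
begin

text \<open>By Fubini's theorem, -m(lambda) = (delta/c) lambda + \<integral>(1 - exp(-lambda r)) rho(dr), where
  rho(dr) = Pi_bar(r) / (c r) dr on (0, \<infinity>), and condition (L) is exactly what makes
  \<integral>min(1, r) rho(dr) finite. Every such exponent belongs to a distribution on [0, \<infinity>):
  truncating rho to (1/n, \<infinity>) gives compound Poisson laws whose Laplace transforms dominate the
  target, which makes them tight, and a weak limit shifted by delta/c has Laplace transform exp m.
  A distribution on [0, \<infinity>) is determined by its Laplace transform at the integers
  (Stone-Weierstrass after the substitution y = exp(-x)), which gives uniqueness; since m computed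
  with n c instead of c is m/n, the law built for n c is an n-th convolution root. Finally
  Pi_bar > 0 near 0 makes the exponent unbounded, and the Chernoff bound
  nu(-\<infinity>, delta/c] \<le> exp(lambda delta/c) \<integral>exp(-lambda x) nu(dx) leaves no mass on [0, delta/c].\<close>

section \<open>Distributions on \<open>[0, \<infinity>)\<close> and their Laplace transforms\<close>

definition nonneg_distribution :: "real measure \<Rightarrow> bool" where
  "nonneg_distribution M \<longleftrightarrow> prob_space M \<and> sets M = sets borel \<and> emeasure M {..<0} = 0"

definition laplace :: "real measure \<Rightarrow> real \<Rightarrow> real" where
  "laplace M l = (\<integral>x. exp (- (l * x)) \<partial>M)"

lemma nonneg_distribution_real_distribution:
  "nonneg_distribution M \<Longrightarrow> real_distribution M"
  by (simp add: nonneg_distribution_def real_distribution_def real_distribution_axioms_def)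

lemma laplace_nonneg: "0 \<le> laplace M l"
  by (simp add: laplace_def)

lemma nonneg_distributionI_atMost:
  assumes "prob_space M" "sets M = sets borel" "emeasure M {..0} = 0"
  shows "nonneg_distribution M"
proof -
  have "emeasure M {..<0} \<le> emeasure M {..0}"
    by (rule emeasure_mono) (use assms in auto)
  with assms show ?thesis
    by (simp add: nonneg_distribution_def)
qed

lemma AE_nonneg_if_emeasure_lessThan_0:
  fixes M :: "real measure"
  assumes "sets M = sets borel" "emeasure M {..<0} = 0"
  shows "AE x in M. 0 \<le> x"
proof -
  have "{..<0::real} \<in> null_sets M"
    using assms by (auto simp: null_sets_def)
  from AE_not_in[OF this] show ?thesis
    by (auto simp: not_less)
qed

lemma AE_nonneg_distribution: "nonneg_distribution M \<Longrightarrow> AE x in M. 0 \<le> x"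
  by (rule AE_nonneg_if_emeasure_lessThan_0) (simp_all add: nonneg_distribution_def)

lemma borel_measurable_nonneg_distribution:
  assumes "nonneg_distribution M" "f \<in> borel_measurable borel"
  shows "f \<in> borel_measurable M"
proof -
  have sets_M: "sets M = sets borel"
    using assms(1) by (simp add: nonneg_distribution_def)
  show ?thesis
    using assms(2) by (simp add: measurable_cong_sets[OF sets_M refl])
qed

lemma integrable_exp_neg:
  fixes M :: "real measure"
  assumes M: "finite_measure M" "sets M = sets borel" "emeasure M {..<0} = 0" and l: "0 \<le> l"
  shows "integrable M (\<lambda>x. exp (- (l * x)))"
proof -
  interpret finite_measure M
    by (rule M)
  show ?thesis
  proof (rule integrable_const_bound[where B=1])
    show "AE x in M. norm (exp (- (l * x))) \<le> 1"
      using AE_nonneg_if_emeasure_lessThan_0[OF M(2,3)] by eventually_elim (simp add: l)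
  qed (simp add: measurable_cong_sets[OF M(2) refl])
qed

lemma integrable_exp_nonneg_distribution:
  "nonneg_distribution M \<Longrightarrow> 0 \<le> l \<Longrightarrow> integrable M (\<lambda>x. exp (- (l * x)))"
  by (rule integrable_exp_neg) (simp_all add: nonneg_distribution_def prob_space_def)

lemma nn_integral_exp_eq_laplace:
  assumes "nonneg_distribution M" "0 \<le> l"
  shows "(\<integral>\<^sup>+x. ennreal (exp (- (l * x))) \<partial>M) = ennreal (laplace M l)"
  unfolding laplace_def
  by (rule nn_integral_eq_integral[OF integrable_exp_nonneg_distribution[OF assms]]) simp

lemma laplace_eqI_nn_integral:
  assumes "nonneg_distribution M" "0 \<le> l"
    and "(\<integral>\<^sup>+x. ennreal (exp (- (l * x))) \<partial>M) = ennreal w" "0 \<le> w"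
  shows "laplace M l = w"
  using assms nn_integral_exp_eq_laplace[OF assms(1,2)] laplace_def by simp

lemma real_distribution_eqI_cts_step:
  assumes M1: "real_distribution M1" and M2: "real_distribution M2"
    and eq: "\<And>a b. a < b \<Longrightarrow> integral\<^sup>L M1 (cts_step a b) = integral\<^sup>L M2 (cts_step a b)"
  shows "M1 = M2"
proof -
  have cdf_le: "cdf A x \<le> cdf B x"
    if A: "real_distribution A" and B: "real_distribution B"
      and AB: "\<And>a b. a < b \<Longrightarrow> integral\<^sup>L A (cts_step a b) = integral\<^sup>L B (cts_step a b)"
    for A B x
  proof -
    interpret A: real_distribution A by fact
    interpret B: real_distribution B by fact
    have "cdf A x \<le> cdf B y" if "x < y" for y
      using A.cdf_cts_step(1)[OF that] AB[OF that] B.cdf_cts_step(2)[OF that] by linarith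
    with eventually_at_right_less have "\<forall>\<^sub>F y in at_right x. cdf A x \<le> cdf B y"
      by (rule eventually_mono)
    with B.cdf_is_right_cont show ?thesis
      by (intro tendsto_lowerbound[of "cdf B"]) (auto simp: continuous_within)
  qed
  have "cdf M1 = cdf M2"
    using cdf_le[OF M1 M2 eq] cdf_le[OF M2 M1 eq[symmetric]] by (intro ext order_antisym)
  then show ?thesis
    by (rule cdf_unique[OF M1 M2])
qed

lemma (in prob_space) abs_integral_diff_le:
  fixes f g :: "'a \<Rightarrow> real"
  assumes "integrable M f" "integrable M g" "\<And>x. x \<in> space M \<Longrightarrow> \<bar>f x - g x\<bar> \<le> e"
  shows "\<bar>integral\<^sup>L M f - integral\<^sup>L M g\<bar> \<le> e"
proof -
  have "\<bar>integral\<^sup>L M f - integral\<^sup>L M g\<bar> = \<bar>\<integral>x. f x - g x \<partial>M\<bar>"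
    using assms by simp
  also have "\<dots> \<le> (\<integral>x. \<bar>f x - g x\<bar> \<partial>M)"
    by (rule integral_abs_bound)
  also have "\<dots> \<le> (\<integral>x. e \<partial>M)"
    using assms by (intro integral_mono) auto
  finally show ?thesis
    by (simp add: prob_space)
qed

lemma (in real_distribution) integrable_continuous_comp_exp:
  fixes h :: "real \<Rightarrow> real"
  assumes h: "continuous_on {0..1} h"
  shows "integrable M (\<lambda>x. h (min 1 (exp (-x))))"
proof -
  obtain B where B: "\<forall>y\<in>{0..1}. \<bar>h y\<bar> \<le> B"
    using compact_continuous_image[OF h compact_Icc] compact_imp_bounded by (force simp: bounded_iff)
  have "(\<lambda>x. h (min 1 (exp (-x)))) \<in> borel_measurable borel"
    by (intro borel_measurable_continuous_onI continuous_on_compose2[OF h] continuous_intros) auto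
  then show ?thesis
    using B by (intro integrable_const_bound[where B=B]) simp_all
qed

lemma integral_poly_exp_eq_laplace:
  assumes M: "nonneg_distribution M"
  shows "(\<integral>x. (\<Sum>i\<le>n. a i * min 1 (exp (-x)) ^ i) \<partial>M) = (\<Sum>i\<le>n. a i * laplace M i)"
proof -
  have int: "integrable M (\<lambda>x. exp (- (real i * x)))" for i
    using M by (rule integrable_exp_nonneg_distribution) simp
  have "AE x in M. (\<Sum>i\<le>n. a i * min 1 (exp (-x)) ^ i) = (\<Sum>i\<le>n. a i * exp (- (real i * x)))"
    using AE_nonneg_distribution[OF M] by eventually_elim (simp add: exp_of_nat_mult[symmetric])
  then have "(\<integral>x. (\<Sum>i\<le>n. a i * min 1 (exp (-x)) ^ i) \<partial>M) = (\<integral>x. (\<Sum>i\<le>n. a i * exp (- (real i * x))) \<partial>M)"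
    using int by (intro integral_cong_AE) (auto intro: borel_measurable_nonneg_distribution[OF M])
  also have "\<dots> = (\<Sum>i\<le>n. a i * laplace M i)"
    using int by (subst Bochner_Integration.integral_sum) (auto simp: laplace_def)
  finally show ?thesis .
qed

lemma laplace_eq_imp_integral_continuous_eq:
  fixes h :: "real \<Rightarrow> real"
  assumes M1: "nonneg_distribution M1" and M2: "nonneg_distribution M2"
    and eq: "\<And>n::nat. laplace M1 n = laplace M2 n"
    and h: "continuous_on {0..1} h"
  shows "(\<integral>x. h (min 1 (exp (-x))) \<partial>M1) = (\<integral>x. h (min 1 (exp (-x))) \<partial>M2)"
proof -
  define H where "H h x = h (min 1 (exp (-x)))" for h :: "real \<Rightarrow> real" and x
  have approx: "\<bar>(\<integral>x. H h x \<partial>M1) - (\<integral>x. H h x \<partial>M2)\<bar> \<le> 2 * e" if e: "0 < e" for e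
  proof -
    obtain p where p: "real_polynomial_function p" "\<And>y. y \<in> {0..1} \<Longrightarrow> \<bar>h y - p y\<bar> < e"
      using Stone_Weierstrass_real_polynomial_function[OF _ h e] by auto
    have p_cont: "continuous_on {0..1} p"
      using p(1) by (simp add: real_polynomial_function_eq continuous_on_polymonial_function)
    have close: "\<bar>(\<integral>x. H h x \<partial>M) - (\<integral>x. H p x \<partial>M)\<bar> \<le> e" if M: "nonneg_distribution M" for M
    proof -
      interpret real_distribution M
        using M by (rule nonneg_distribution_real_distribution)
      show ?thesis
        using p(2) unfolding H_def
        by (intro abs_integral_diff_le integrable_continuous_comp_exp h p_cont) (simp add: less_imp_le)
    qed
    obtain a n where "p = (\<lambda>y. \<Sum>i\<le>n. a i * y ^ i)"
      using p(1) real_polynomial_function_iff_sum by auto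
    then have "(\<integral>x. H p x \<partial>M1) = (\<integral>x. H p x \<partial>M2)"
      using M1 M2 eq by (simp add: H_def integral_poly_exp_eq_laplace)
    with close[OF M1] close[OF M2] show ?thesis
      by linarith
  qed
  have "\<bar>(\<integral>x. H h x \<partial>M1) - (\<integral>x. H h x \<partial>M2)\<bar> \<le> 0"
  proof (rule field_le_epsilon)
    fix e :: real assume "0 < e"
    with approx[of "e / 2"] show "\<bar>(\<integral>x. H h x \<partial>M1) - (\<integral>x. H h x \<partial>M2)\<bar> \<le> 0 + e"
      by simp
  qed
  then show ?thesis
    by (simp add: H_def)
qed

theorem laplace_unique:
  assumes M1: "nonneg_distribution M1" and M2: "nonneg_distribution M2"
    and eq: "\<And>n::nat. laplace M1 n = laplace M2 n"
  shows "M1 = M2"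
proof (rule real_distribution_eqI_cts_step)
  fix a b :: real assume ab: "a < b"
  define h where "h y = cts_step a b (- ln (max y (exp (-b))))" for y
  have step_cont: "continuous_on UNIV (cts_step a b)"
    using cts_step_uniformly_continuous[OF ab] uniformly_continuous_imp_continuous by blast
  have "max y (exp (-b)) \<noteq> 0" for y
    by (metis exp_gt_zero less_max_iff_disj order_less_irrefl)
  then have h_cont: "continuous_on {0..1} h"
    unfolding h_def by (intro continuous_on_compose2[OF step_cont] continuous_intros) auto
  have h_eq: "h (exp (-x)) = cts_step a b x" for x
  proof -
    have "- ln (max (exp (-x)) (exp (-b))) = min x b"
      by (cases "x \<le> b") (auto simp: max_def min_def)
    then show ?thesis
      using ab by (auto simp: h_def cts_step_def min_def)
  qed
  have step_meas: "cts_step a b \<in> borel_measurable borel"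
    using step_cont by (rule borel_measurable_continuous_onI)
  have h_meas: "(\<lambda>x. h (min 1 (exp (-x)))) \<in> borel_measurable borel"
    by (intro borel_measurable_continuous_onI continuous_on_compose2[OF h_cont] continuous_intros) auto
  have "integral\<^sup>L M (cts_step a b) = (\<integral>x. h (min 1 (exp (-x))) \<partial>M)"
    if M: "nonneg_distribution M" for M
  proof (rule integral_cong_AE)
    show "AE x in M. cts_step a b x = h (min 1 (exp (-x)))"
      using AE_nonneg_distribution[OF M] by eventually_elim (simp add: h_eq)
  qed (simp_all add: borel_measurable_nonneg_distribution[OF M] step_meas h_meas)
  then show "integral\<^sup>L M1 (cts_step a b) = integral\<^sup>L M2 (cts_step a b)"
    using laplace_eq_imp_integral_continuous_eq[OF M1 M2 eq h_cont] M1 M2 by simp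
qed (use M1 M2 nonneg_distribution_real_distribution in auto)

section \<open>Convolution powers and compound Poisson distributions\<close>

lemma nonneg_distribution_return_0: "nonneg_distribution (return borel 0)"
  by (simp add: nonneg_distribution_def prob_space_return)

lemma laplace_return_0: "laplace (return borel 0) l = 1"
  unfolding laplace_def by (subst integral_return) simp_all

lemma nonneg_distribution_convolution:
  assumes M: "nonneg_distribution M" and N: "nonneg_distribution N"
  shows "nonneg_distribution (M \<star> N)"
proof -
  have sets: "sets M = sets borel" "sets N = sets borel" and fin: "finite_measure M" "finite_measure N"
    using M N by (auto simp: nonneg_distribution_def prob_space_def)
  interpret pair_prob_space M N
    using M N by (simp add: nonneg_distribution_def pair_prob_space_def pair_sigma_finite_def
        prob_space_imp_sigma_finite)
  have "prob_space (M \<star> N)"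
    unfolding convolution_def by (rule prob_space_distr) (use sets in simp)
  moreover have "emeasure (M \<star> N) {..<0} = (\<integral>\<^sup>+x. \<integral>\<^sup>+y. indicator {..<0} (x + y) \<partial>N \<partial>M)"
    using fin sets by (intro convolution_emeasure') auto
  moreover have "\<dots> = 0"
  proof (rule nn_integral_zero')
    show "AE x in M. (\<integral>\<^sup>+y. indicator {..<0} (x + y) \<partial>N) = 0"
      using AE_nonneg_distribution[OF M]
    proof eventually_elim
      case (elim x)
      have "(\<integral>\<^sup>+y. indicator {..<0} (x + y) \<partial>N) \<le> (\<integral>\<^sup>+y. indicator {..<0} y \<partial>N)"
        using elim by (intro nn_integral_mono) (auto split: split_indicator)
      also have "\<dots> = 0"
        using N by (simp add: nonneg_distribution_def)
      finally show ?case
        by simp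
    qed
  qed
  ultimately show ?thesis
    using sets by (simp add: nonneg_distribution_def)
qed

lemma laplace_convolution:
  assumes M: "nonneg_distribution M" and N: "nonneg_distribution N" and l: "0 \<le> l"
  shows "laplace (M \<star> N) l = laplace M l * laplace N l"
proof (rule laplace_eqI_nn_integral[OF nonneg_distribution_convolution[OF M N] l])
  have sets: "sets M = sets borel" "sets N = sets borel" and fin: "finite_measure M" "finite_measure N"
    using M N by (auto simp: nonneg_distribution_def prob_space_def)
  have "(\<integral>\<^sup>+x. ennreal (exp (- (l * x))) \<partial>(M \<star> N))
      = (\<integral>\<^sup>+x. \<integral>\<^sup>+y. ennreal (exp (- (l * x))) * ennreal (exp (- (l * y))) \<partial>N \<partial>M)"
    using fin sets by (subst nn_integral_convolution)
      (auto simp: ennreal_mult[symmetric] exp_add[symmetric] algebra_simps)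
  also have "\<dots> = (\<integral>\<^sup>+x. ennreal (exp (- (l * x))) * ennreal (laplace N l) \<partial>M)"
    using sets by (simp add: nn_integral_cmult nn_integral_exp_eq_laplace[OF N l])
  also have "\<dots> = ennreal (laplace M l * laplace N l)"
    using sets by (simp add: nn_integral_multc nn_integral_exp_eq_laplace[OF M l] ennreal_mult laplace_nonneg)
  finally show "(\<integral>\<^sup>+x. ennreal (exp (- (l * x))) \<partial>(M \<star> N)) = ennreal (laplace M l * laplace N l)" .
qed (simp add: laplace_nonneg)

lemma nonneg_distribution_conv_power:
  "nonneg_distribution M \<Longrightarrow> nonneg_distribution (conv_power M n)"
  by (induction n) (simp_all add: nonneg_distribution_return_0 nonneg_distribution_convolution)

lemma laplace_conv_power:
  assumes "nonneg_distribution M" "0 \<le> l"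
  shows "laplace (conv_power M n) l = laplace M l ^ n"
  by (induction n)
    (simp_all add: assms laplace_return_0 laplace_convolution nonneg_distribution_conv_power)

lemma inf_divisible_if_laplace_roots:
  assumes \<nu>: "nonneg_distribution \<nu>"
    and roots: "\<And>n. 1 \<le> n \<Longrightarrow> \<exists>\<rho>. nonneg_distribution \<rho> \<and> (\<forall>l\<ge>0. laplace \<rho> l ^ n = laplace \<nu> l)"
  shows "inf_divisible \<nu>"
  unfolding inf_divisible_def
proof (intro allI impI)
  fix n :: nat assume "1 \<le> n"
  then obtain \<rho> where \<rho>: "nonneg_distribution \<rho>" and root: "\<And>l. 0 \<le> l \<Longrightarrow> laplace \<rho> l ^ n = laplace \<nu> l"
    using roots by blast
  have "conv_power \<rho> n = \<nu>"
    using \<rho> \<nu> by (intro laplace_unique nonneg_distribution_conv_power) (simp_all add: laplace_conv_power root)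
  then show "\<exists>\<rho>. prob_space \<rho> \<and> sets \<rho> = sets borel \<and> conv_power \<rho> n = \<nu>"
    using \<rho> by (auto simp: nonneg_distribution_def)
qed

lemma nn_integral_poisson_pmf_power:
  assumes t: "0 < t" and q: "0 \<le> q"
  shows "(\<integral>\<^sup>+k. ennreal (q ^ k) \<partial>measure_pmf (poisson_pmf t)) = ennreal (exp (t * (q - 1)))"
proof -
  have sums: "(\<lambda>k. exp (-t) * ((t * q) ^ k / fact k)) sums (exp (-t) * exp (t * q))"
    using exp_converges[of "t * q"] by (intro sums_mult) (simp add: divide_inverse mult.commute)
  have "(\<integral>\<^sup>+k. ennreal (q ^ k) \<partial>measure_pmf (poisson_pmf t))
      = (\<Sum>k. ennreal (exp (-t) * ((t * q) ^ k / fact k)))"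
    using t q by (simp add: nn_integral_measure_pmf nn_integral_count_space_nat ennreal_mult[symmetric]
        field_simps)
  also have "\<dots> = ennreal (exp (-t) * exp (t * q))"
    using sums t q by (simp add: suminf_ennreal2 sums_iff)
  also have "exp (-t) * exp (t * q) = exp (t * (q - 1))"
    by (simp add: exp_add[symmetric] algebra_simps)
  finally show ?thesis .
qed

text \<open>\<open>Q\<close> is the law of the sum of a Poisson(\<open>t\<close>) number of independent \<open>P\<close>-distributed summands.\<close>

lemma compound_poisson_laplace:
  assumes P: "nonneg_distribution P" and t: "0 < t"
  defines "Q \<equiv> measure_pmf (poisson_pmf t) \<bind> conv_power P"
  shows "nonneg_distribution Q" and "\<And>l. 0 \<le> l \<Longrightarrow> laplace Q l = exp (t * (laplace P l - 1))"
proof -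
  have CP: "nonneg_distribution (conv_power P k)" for k
    using P by (rule nonneg_distribution_conv_power)
  then have K: "conv_power P \<in> measurable (measure_pmf (poisson_pmf t)) (subprob_algebra borel)"
    by (auto simp: nonneg_distribution_def space_subprob_algebra prob_space_imp_subprob_space)
  have "prob_space Q"
    unfolding Q_def using CP
    by (intro prob_space.prob_space_bind[OF prob_space_measure_pmf _ K]) (simp add: nonneg_distribution_def)
  moreover have "sets Q = sets borel"
    unfolding Q_def using CP by (intro sets_bind) (auto simp: nonneg_distribution_def)
  moreover have "emeasure Q {..<0} = 0"
    unfolding Q_def using CP by (subst emeasure_bind[OF _ K]) (auto simp: nonneg_distribution_def)
  ultimately show Q: "nonneg_distribution Q"
    by (simp add: nonneg_distribution_def)
  fix l :: real assume l: "0 \<le> l"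
  show "laplace Q l = exp (t * (laplace P l - 1))"
  proof (rule laplace_eqI_nn_integral[OF Q l])
    have "(\<integral>\<^sup>+x. ennreal (exp (- (l * x))) \<partial>Q)
        = (\<integral>\<^sup>+k. ennreal (laplace (conv_power P k) l) \<partial>measure_pmf (poisson_pmf t))"
      unfolding Q_def by (simp add: nn_integral_bind[OF _ K] nn_integral_exp_eq_laplace[OF CP l])
    also have "\<dots> = ennreal (exp (t * (laplace P l - 1)))"
      by (simp add: laplace_conv_power[OF P l] nn_integral_poisson_pmf_power[OF t] laplace_nonneg)
    finally show "(\<integral>\<^sup>+x. ennreal (exp (- (l * x))) \<partial>Q) = ennreal (exp (t * (laplace P l - 1)))" .
  qed simp
qed

definition laplace_exponent :: "real measure \<Rightarrow> real \<Rightarrow> real" where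
  "laplace_exponent \<mu> l = (\<integral>r. 1 - exp (- (l * r)) \<partial>\<mu>)"

lemma normalized_measure_laplace:
  assumes R: "finite_measure R" "sets R = sets borel" "emeasure R {..<0} = 0"
    and t: "0 < measure R (space R)"
  defines "P \<equiv> scale_measure (ennreal (1 / measure R (space R))) R"
  shows "nonneg_distribution P"
    and "\<And>l. 0 \<le> l \<Longrightarrow> laplace P l = laplace R l / measure R (space R)"
proof -
  interpret R: finite_measure R
    by (rule R)
  have "emeasure P (space P) = ennreal (1 / measure R (space R)) * ennreal (measure R (space R))"
    by (simp add: P_def R.emeasure_eq_measure space_scale_measure)
  also have "\<dots> = 1"
    using t by (simp flip: ennreal_mult)
  finally show P: "nonneg_distribution P"
    using R by (simp add: nonneg_distribution_def prob_spaceI P_def)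
  fix l :: real assume l: "0 \<le> l"
  show "laplace P l = laplace R l / measure R (space R)"
  proof (rule laplace_eqI_nn_integral[OF P l])
    have "(\<integral>\<^sup>+x. ennreal (exp (- (l * x))) \<partial>P) = ennreal (1 / measure R (space R)) * ennreal (laplace R l)"
      unfolding P_def laplace_def using R(2)
      by (simp add: nn_integral_scale_measure nn_integral_eq_integral integrable_exp_neg[OF R l])
    also have "\<dots> = ennreal (laplace R l / measure R (space R))"
      using t by (simp add: ennreal_mult[symmetric] laplace_nonneg)
    finally show "(\<integral>\<^sup>+x. ennreal (exp (- (l * x))) \<partial>P) = ennreal (laplace R l / measure R (space R))" .
  qed (use t in \<open>simp add: laplace_nonneg\<close>)
qed

lemma compound_poisson_exists:
  assumes R: "finite_measure R" "sets R = sets borel" "emeasure R {..<0} = 0"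
  shows "\<exists>Q. nonneg_distribution Q \<and> (\<forall>l\<ge>0. laplace Q l = exp (- laplace_exponent R l))"
proof (cases "measure R (space R) = 0")
  case True
  then have "AE x in R. False"
    using R(1) by (intro AE_I'[of "space R"]) (auto simp: finite_measure.emeasure_eq_measure null_sets_def)
  then have "laplace_exponent R l = 0" for l
    unfolding laplace_exponent_def by (intro integral_eq_zero_AE) (simp add: eventually_mono)
  then show ?thesis
    using nonneg_distribution_return_0 laplace_return_0 by auto
next
  case False
  interpret R: finite_measure R
    by (rule R)
  define t where "t = measure R (space R)"
  then have t: "0 < t"
    using False by (simp add: order_less_le)
  note P = normalized_measure_laplace[OF R, folded t_def, OF t]
  have exponent_R: "laplace_exponent R l = t - laplace R l" if "0 \<le> l" for l
    using integrable_exp_neg[OF R that] by (simp add: laplace_exponent_def laplace_def t_def)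
  show ?thesis
    using compound_poisson_laplace[OF P(1) t] t by (auto simp: P(2) exponent_R field_simps)
qed

section \<open>Weak limits and shifts\<close>

lemma measure_greaterThan_le_laplace:
  assumes Q: "nonneg_distribution Q" and l: "0 \<le> l"
  shows "measure Q {x<..} * (1 - exp (- (l * x))) \<le> 1 - laplace Q l"
proof -
  interpret real_distribution Q
    using Q by (rule nonneg_distribution_real_distribution)
  have int: "integrable Q (\<lambda>y. exp (- (l * y)))"
    using Q l by (rule integrable_exp_nonneg_distribution)
  have "measure Q {x<..} * (1 - exp (- (l * x))) = (\<integral>y. indicator {x<..} y * (1 - exp (- (l * x))) \<partial>Q)"
    by simp
  also have "\<dots> \<le> (\<integral>y. 1 - exp (- (l * y)) \<partial>Q)"
  proof (rule integral_mono_AE)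
    show "integrable Q (\<lambda>y. indicator {x<..} y * (1 - exp (- (l * x))))"
      by (intro integrable_mult_left integrable_real_indicator) (auto simp: less_top[symmetric])
    show "AE y in Q. indicator {x<..} y * (1 - exp (- (l * x))) \<le> 1 - exp (- (l * y))"
      using AE_nonneg_distribution[OF Q]
    proof eventually_elim
      case (elim y)
      then show ?case
        using l mult_left_mono[of x y l] by (cases "x < y") auto
    qed
  qed (use int in simp)
  also have "\<dots> = 1 - laplace Q l"
    using int prob_space by (simp add: laplace_def)
  finally show ?thesis .
qed

lemma measure_greaterThan_le_2_laplace:
  assumes Q: "nonneg_distribution Q" and l: "0 < l"
  shows "measure Q {2 / l<..} \<le> 2 * (1 - laplace Q l)"
proof -
  have "exp (-2) \<le> (1 / 2 :: real)"
    using exp_ge_add_one_self[of 2] by (simp add: exp_minus field_simps)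
  then have "measure Q {2 / l<..} * (1 / 2) \<le> measure Q {2 / l<..} * (1 - exp (-2))"
    by (intro mult_left_mono) auto
  also have "\<dots> \<le> 1 - laplace Q l"
    using measure_greaterThan_le_laplace[OF Q, of l "2 / l"] l by simp
  finally show ?thesis
    by simp
qed

lemma measure_greaterThan_minus_1_atMost:
  assumes Q: "nonneg_distribution Q"
  shows "1 - measure Q {x<..} \<le> measure Q {-1<..x}"
proof -
  interpret real_distribution Q
    using Q by (rule nonneg_distribution_real_distribution)
  have "measure Q {..-1} \<le> measure Q {..<0}"
    by (intro finite_measure_mono) auto
  also have "\<dots> = 0"
    using Q by (simp add: nonneg_distribution_def measure_def)
  finally have "measure Q {..-1} = 0"
    using measure_nonneg[of Q "{..-1}"] by linarith
  moreover have "UNIV - {-1<..x} = {..-1} \<union> {x<..}"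
    by auto
  ultimately show ?thesis
    using prob_compl[of "{-1<..x}"] measure_Un_le[of "{..-1}" Q "{x<..}"] by simp
qed

lemma tight_if_laplace_lower_bound:
  assumes Q: "\<And>n. nonneg_distribution (Q n)"
    and bound: "\<And>n l. 0 \<le> l \<Longrightarrow> L l \<le> laplace (Q n) l"
    and L0: "(\<lambda>k. L (1 / Suc k)) \<longlonglongrightarrow> 1"
  shows "tight Q"
  unfolding tight_def
proof (intro conjI allI impI)
  show "real_distribution (Q n)" for n
    using Q by (rule nonneg_distribution_real_distribution)
  fix e :: real assume e: "0 < e"
  have "\<forall>\<^sub>F k in sequentially. dist (L (1 / Suc k)) 1 < e / 2"
    using L0 e by (intro tendstoD) simp_all
  then obtain k where "dist (L (1 / Suc k)) 1 < e / 2"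
    unfolding eventually_sequentially by blast
  then have k: "1 - L (1 / Suc k) < e / 2"
    unfolding dist_real_def abs_less_iff by linarith
  define x where "x = 2 / (1 / real (Suc k))"
  have "1 - e < measure (Q n) {-1<..x}" for n
    using measure_greaterThan_le_2_laplace[OF Q, of "1 / Suc k" n] bound[of "1 / Suc k" n]
      measure_greaterThan_minus_1_atMost[OF Q, of n x] k
    unfolding x_def by simp
  moreover have "-1 < x"
    by (simp add: x_def)
  ultimately show "\<exists>a b. a < b \<and> (\<forall>n. 1 - e < measure (Q n) {a<..b})"
    by blast
qed

lemma nonneg_distribution_weak_conv_limit:
  assumes Q: "\<And>n. nonneg_distribution (Q n)" and M: "real_distribution M"
    and conv: "weak_conv_m Q M"
  shows "nonneg_distribution M"
proof -
  interpret M: real_distribution M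
    by (rule M)
  define g where "g x = min 1 (max 0 (- x))" for x :: real
  have g_meas: "g \<in> borel_measurable M"
    unfolding g_def by (simp add: measurable_cong_sets[OF M.events_eq_borel refl])
  have "isCont g x" "norm (g x) \<le> 1" for x
    unfolding g_def by (intro continuous_intros) auto
  then have "(\<lambda>n. \<integral>x. g x \<partial>Q n) \<longlonglongrightarrow> (\<integral>x. g x \<partial>M)"
    using Q nonneg_distribution_real_distribution
    by (intro weak_conv_imp_integral_bdd_continuous_conv[OF _ M conv]) auto
  moreover have "(\<integral>x. g x \<partial>Q n) = 0" for n
  proof (rule integral_eq_zero_AE)
    show "AE x in Q n. g x = 0"
      using AE_nonneg_distribution[OF Q] by eventually_elim (simp add: g_def)
  qed
  ultimately have "(\<integral>x. g x \<partial>M) = 0"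
    by (simp add: LIMSEQ_const_iff)
  moreover have "integrable M g"
    using g_meas by (intro M.integrable_const_bound[where B=1]) (auto simp: g_def)
  ultimately have "AE x in M. g x = 0"
    by (subst (asm) integral_nonneg_eq_0_iff_AE) (auto simp: g_def)
  then have "AE x in M. 0 \<le> x"
    by (rule eventually_mono) (auto simp: g_def min_def max_def split: if_splits)
  then have "emeasure M {..<0} = 0"
    by (subst (asm) AE_iff_measurable[of "{..<0}"]) (auto simp: not_le)
  then show ?thesis
    using M.prob_space_axioms by (simp add: nonneg_distribution_def)
qed

lemma laplace_weak_conv:
  assumes Q: "\<And>n. nonneg_distribution (Q n)" and M: "nonneg_distribution M"
    and conv: "weak_conv_m Q M" and l: "0 \<le> l"
  shows "(\<lambda>n. laplace (Q n) l) \<longlonglongrightarrow> laplace M l"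
proof -
  define f where "f x = exp (- (l * max x 0))" for x
  have f_cont: "isCont f x" for x
    unfolding f_def by (intro continuous_intros)
  have f_laplace: "(\<integral>x. f x \<partial>N) = laplace N l" if N: "nonneg_distribution N" for N
    unfolding laplace_def
  proof (rule integral_cong_AE)
    show "f \<in> borel_measurable N"
      using f_cont by (intro borel_measurable_nonneg_distribution[OF N] borel_measurable_continuous_onI
          continuous_at_imp_continuous_on) simp
    show "AE x in N. f x = exp (- (l * x))"
      using AE_nonneg_distribution[OF N] by eventually_elim (simp add: f_def)
  qed (simp add: borel_measurable_nonneg_distribution[OF N])
  have "norm (f x) \<le> 1" for x
    using l by (simp add: f_def)
  then have "(\<lambda>n. \<integral>x. f x \<partial>Q n) \<longlonglongrightarrow> (\<integral>x. f x \<partial>M)"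
    using Q M nonneg_distribution_real_distribution f_cont
    by (intro weak_conv_imp_integral_bdd_continuous_conv[OF _ _ conv]) auto
  then show ?thesis
    using f_laplace Q M by simp
qed

lemma laplace_limit_exists:
  assumes Q: "\<And>n. nonneg_distribution (Q n)"
    and lim: "\<And>l. 0 \<le> l \<Longrightarrow> (\<lambda>n. laplace (Q n) l) \<longlonglongrightarrow> L l"
    and bound: "\<And>n l. 0 \<le> l \<Longrightarrow> L l \<le> laplace (Q n) l"
    and L0: "(\<lambda>k. L (1 / Suc k)) \<longlonglongrightarrow> 1"
  shows "\<exists>M. nonneg_distribution M \<and> (\<forall>l\<ge>0. laplace M l = L l)"
proof -
  have "tight Q"
    by (rule tight_if_laplace_lower_bound[OF Q bound L0])
  from tight_imp_convergent_subsubsequence[OF this strict_mono_id]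
  obtain r M where r: "strict_mono r" and M: "real_distribution M" and conv: "weak_conv_m (Q \<circ> id \<circ> r) M"
    by (elim exE conjE)
  have Qr: "nonneg_distribution ((Q \<circ> id \<circ> r) n)" for n
    using Q by simp
  have M': "nonneg_distribution M"
    by (rule nonneg_distribution_weak_conv_limit[OF Qr M conv])
  have "laplace M l = L l" if l: "0 \<le> l" for l
  proof (rule LIMSEQ_unique)
    show "(\<lambda>n. laplace ((Q \<circ> id \<circ> r) n) l) \<longlonglongrightarrow> laplace M l"
      by (rule laplace_weak_conv[OF Qr M' conv l])
    show "(\<lambda>n. laplace ((Q \<circ> id \<circ> r) n) l) \<longlonglongrightarrow> L l"
      using LIMSEQ_subseq_LIMSEQ[OF lim[OF l] r] by (simp add: comp_def)
  qed
  with M' show ?thesis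
    by blast
qed

lemma nonneg_distribution_shift:
  assumes M: "nonneg_distribution M" and a: "0 \<le> a"
  shows "nonneg_distribution (distr M borel (\<lambda>x. x + a))"
proof -
  have meas: "(\<lambda>x. x + a) \<in> measurable M borel"
    using M by (simp add: borel_measurable_nonneg_distribution)
  have "emeasure (distr M borel (\<lambda>x. x + a)) {..<0} = emeasure M ((\<lambda>x. x + a) -` {..<0} \<inter> space M)"
    by (rule emeasure_distr[OF meas]) simp
  also have "\<dots> \<le> emeasure M {..<0}"
    using a M by (intro emeasure_mono) (auto simp: nonneg_distribution_def)
  finally show ?thesis
    using M meas by (simp add: nonneg_distribution_def prob_space.prob_space_distr)
qed

lemma laplace_shift:
  assumes M: "nonneg_distribution M"
  shows "laplace (distr M borel (\<lambda>x. x + a)) l = exp (- (a * l)) * laplace M l"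
proof -
  have "laplace (distr M borel (\<lambda>x. x + a)) l = (\<integral>x. exp (- (l * (x + a))) \<partial>M)"
    unfolding laplace_def using M by (intro integral_distr) (simp_all add: borel_measurable_nonneg_distribution)
  also have "\<dots> = (\<integral>x. exp (- (a * l)) * exp (- (l * x)) \<partial>M)"
    by (simp add: exp_add[symmetric] algebra_simps)
  finally show ?thesis
    by (simp add: laplace_def)
qed

lemma measure_atMost_le_laplace:
  assumes N: "nonneg_distribution N" and l: "0 \<le> l"
  shows "measure N {..a} \<le> exp (a * l) * laplace N l"
proof -
  interpret real_distribution N
    using N by (rule nonneg_distribution_real_distribution)
  have "measure N {..a} = (\<integral>x. indicator {..a} x \<partial>N)"
    by simp
  also have "\<dots> \<le> (\<integral>x. exp (a * l) * exp (- (l * x)) \<partial>N)"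
  proof (rule integral_mono)
    show "integrable N (\<lambda>x. exp (a * l) * exp (- (l * x)))"
      using integrable_exp_nonneg_distribution[OF N l] by simp
    fix x
    have "x \<le> a \<Longrightarrow> 0 \<le> a * l - l * x"
      using mult_right_mono[of x a l] l by (simp add: algebra_simps)
    then show "indicator {..a} x \<le> exp (a * l) * exp (- (l * x))"
      by (auto simp: exp_add[symmetric] split: split_indicator)
  qed (auto simp: less_top[symmetric])
  finally show ?thesis
    by (simp add: laplace_def)
qed

lemma emeasure_greaterThan_eq_1_if_laplace:
  assumes N: "nonneg_distribution N"
    and laplace_N: "\<And>l. 0 \<le> l \<Longrightarrow> laplace N l = exp (- (a * l) - \<Phi> l)"
    and unbounded: "\<And>K. \<exists>l\<ge>0. K \<le> \<Phi> l"
  shows "emeasure N {a<..} = 1"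
proof -
  interpret real_distribution N
    using N by (rule nonneg_distribution_real_distribution)
  have bound: "measure N {..a} \<le> exp (- \<Phi> l)" if "0 \<le> l" for l
  proof -
    have "exp (a * l) * exp (- (a * l) - \<Phi> l) = exp (- \<Phi> l)"
      by (simp add: exp_add[symmetric])
    then show ?thesis
      using measure_atMost_le_laplace[OF N that, of a] laplace_N[OF that] by simp
  qed
  have "measure N {..a} = 0"
  proof (rule ccontr)
    assume "measure N {..a} \<noteq> 0"
    then have pos: "0 < measure N {..a}"
      using measure_nonneg[of N "{..a}"] by linarith
    obtain l where l: "0 \<le> l" "- ln (measure N {..a} / 2) \<le> \<Phi> l"
      using unbounded by blast
    have "exp (- \<Phi> l) \<le> exp (ln (measure N {..a} / 2))"
      using l(2) by simp
    also have "\<dots> = measure N {..a} / 2"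
      using pos by simp
    finally have "exp (- \<Phi> l) \<le> measure N {..a} / 2" .
    with bound[OF l(1)] pos show False
      by linarith
  qed
  then have "prob (space N - {..a}) = 1"
    using prob_compl[of "{..a}"] by simp
  moreover have "space N - {..a} = {a<..}"
    by auto
  ultimately show ?thesis
    by (simp add: emeasure_eq_measure)
qed

section \<open>Distributions with a prescribed Laplace exponent\<close>

lemma one_minus_exp_le_min:
  fixes l r :: real
  assumes "0 \<le> l" "0 \<le> r"
  shows "1 - exp (- (l * r)) \<le> max 1 l * min 1 r"
proof -
  have "1 - exp (- (l * r)) \<le> l * r"
    using exp_ge_add_one_self[of "- (l * r)"] by simp
  moreover have "l * r \<le> max 1 l * r"
    using assms by (intro mult_right_mono) auto
  moreover have "1 - exp (- (l * r)) \<le> 1 * max 1 l"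
    by (simp add: order_trans[OF _ max.cobounded1])
  ultimately show ?thesis
    by (cases "r \<le> 1") (simp_all add: min_def)
qed

lemma eventually_inverse_Suc_less: "0 < r \<Longrightarrow> \<forall>\<^sub>F n in sequentially. 1 / real (Suc n) < r"
  using order_tendstoD(2)[OF LIMSEQ_inverse_real_of_nat, of r] by (simp add: inverse_eq_divide)

locale subordinator_levy_measure =
  fixes \<mu> :: "real measure"
  assumes sets_eq [measurable_cong]: "sets \<mu> = sets borel"
    and emeasure_atMost_0: "emeasure \<mu> {..0} = 0"
    and nn_integral_min_finite: "(\<integral>\<^sup>+ r. ennreal (min 1 r) \<partial>\<mu>) < \<infinity>"
begin

lemma space_eq [simp]: "space \<mu> = UNIV"
  using sets_eq_imp_space_eq[OF sets_eq] by simp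

lemma AE_pos: "AE r in \<mu>. 0 < r"
proof -
  have "{..0::real} \<in> null_sets \<mu>"
    using emeasure_atMost_0 by (simp add: null_sets_def)
  from AE_not_in[OF this] show ?thesis
    by (simp add: not_le)
qed

lemma emeasure_greaterThan_finite:
  assumes "0 < \<delta>"
  shows "emeasure \<mu> {\<delta><..} < \<infinity>"
proof -
  define e where "e = min 1 \<delta>"
  have e: "0 < e" "e \<le> 1" "e \<le> \<delta>"
    using assms by (auto simp: e_def)
  have "emeasure \<mu> {\<delta><..} = (\<integral>\<^sup>+ r. indicator {\<delta><..} r \<partial>\<mu>)"
    by simp
  also have "\<dots> \<le> (\<integral>\<^sup>+ r. ennreal (1 / e) * ennreal (min 1 r) \<partial>\<mu>)"
  proof (intro nn_integral_mono)
    fix r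
    show "indicator {\<delta><..} r \<le> ennreal (1 / e) * ennreal (min 1 r)"
    proof (cases "\<delta> < r")
      case True
      then have "1 \<le> 1 / e * min 1 r"
        using e by (auto simp: field_simps min_def)
      then show ?thesis
        using True e by (simp add: ennreal_mult[symmetric] ennreal_1[symmetric] del: ennreal_1)
    qed simp
  qed
  also have "\<dots> = ennreal (1 / e) * (\<integral>\<^sup>+ r. ennreal (min 1 r) \<partial>\<mu>)"
    by (rule nn_integral_cmult) simp
  also have "\<dots> < \<infinity>"
    using nn_integral_min_finite by (simp add: ennreal_mult_less_top)
  finally show ?thesis .
qed

sublocale sigma_finite_measure \<mu>
proof
  define A where "A = insert {..0::real} (range (\<lambda>n::nat. {1 / real (Suc n)<..}))"
  have "x \<in> \<Union> A" for x :: real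
  proof (cases "x \<le> 0")
    case False
    then obtain n where "1 / real (Suc n) < x"
      using eventually_inverse_Suc_less[of x] eventually_happens' by fastforce
    then show ?thesis
      by (auto simp: A_def)
  qed (auto simp: A_def)
  moreover have "emeasure \<mu> {1 / real (Suc n)<..} \<noteq> \<infinity>" for n
    using emeasure_greaterThan_finite[of "1 / real (Suc n)"] by simp
  then have "emeasure \<mu> a \<noteq> \<infinity>" if "a \<in> A" for a
    using that emeasure_atMost_0 by (auto simp: A_def)
  ultimately show "\<exists>A. countable A \<and> A \<subseteq> sets \<mu> \<and> \<Union> A = space \<mu> \<and> (\<forall>a\<in>A. emeasure \<mu> a \<noteq> \<infinity>)"
    by (intro exI[of _ A]) (auto simp: A_def)
qed

lemma integrable_min: "integrable \<mu> (\<lambda>r. min 1 r)"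
  using AE_pos nn_integral_min_finite by (intro integrableI_nonneg) (auto elim: eventually_mono)

lemma integrable_one_minus_exp:
  assumes l: "0 \<le> l"
  shows "integrable \<mu> (\<lambda>r. 1 - exp (- (l * r)))"
proof (rule Bochner_Integration.integrable_bound)
  show "integrable \<mu> (\<lambda>r. max 1 l * min 1 r)"
    by (rule integrable_mult_right[OF integrable_min])
  show "AE r in \<mu>. norm (1 - exp (- (l * r))) \<le> norm (max 1 l * min 1 r)"
    using AE_pos
  proof eventually_elim
    case (elim r)
    then show ?case
      using one_minus_exp_le_min[OF l, of r] l by simp
  qed
qed simp

lemma nn_integral_one_minus_exp:
  "0 \<le> l \<Longrightarrow> (\<integral>\<^sup>+ r. ennreal (1 - exp (- (l * r))) \<partial>\<mu>) = ennreal (laplace_exponent \<mu> l)"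
  unfolding laplace_exponent_def using AE_pos
  by (intro nn_integral_eq_integral integrable_one_minus_exp)
    (auto elim!: eventually_mono)

lemma laplace_exponent_truncation:
  "laplace_exponent (density \<mu> (indicator A)) l = (\<integral>r. indicator A r * (1 - exp (- (l * r))) \<partial>\<mu>)"
  if "A \<in> sets borel"
proof -
  have "density \<mu> (indicator A) = density \<mu> (\<lambda>r. ennreal (indicator A r))"
    by (rule arg_cong[where f="density \<mu>"]) (auto split: split_indicator)
  then show ?thesis
    using that by (simp add: laplace_exponent_def integral_density)
qed

lemma laplace_exponent_truncation_le:
  assumes "0 \<le> l"
  shows "laplace_exponent (density \<mu> (indicator {\<delta><..})) l \<le> laplace_exponent \<mu> l"
  unfolding laplace_exponent_truncation[OF borel_open[OF open_greaterThan]]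
  unfolding laplace_exponent_def
proof (rule integral_mono_AE)
  show "integrable \<mu> (\<lambda>r. indicator {\<delta><..} r * (1 - exp (- (l * r))))"
    using integrable_mult_indicator[OF _ integrable_one_minus_exp[OF assms], of "{\<delta><..}"] by simp
  show "AE r in \<mu>. indicator {\<delta><..} r * (1 - exp (- (l * r))) \<le> 1 - exp (- (l * r))"
    using AE_pos by eventually_elim (use assms in \<open>simp add: indicator_def\<close>)
qed (rule integrable_one_minus_exp[OF assms])

lemma laplace_exponent_truncation_tendsto:
  assumes l: "0 \<le> l"
  shows "(\<lambda>n. laplace_exponent (density \<mu> (indicator {1 / real (Suc n)<..})) l) \<longlonglongrightarrow> laplace_exponent \<mu> l"
  unfolding laplace_exponent_truncation[OF borel_open[OF open_greaterThan]]
  unfolding laplace_exponent_def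
proof (rule integral_dominated_convergence)
  show "integrable \<mu> (\<lambda>r. 1 - exp (- (l * r)))"
    by (rule integrable_one_minus_exp[OF l])
  show "AE r in \<mu>. (\<lambda>n. indicator {1 / real (Suc n)<..} r * (1 - exp (- (l * r)))) \<longlonglongrightarrow> 1 - exp (- (l * r))"
    using AE_pos
  proof eventually_elim
    case (elim r)
    show ?case
      using eventually_inverse_Suc_less[OF elim]
      by (rule tendsto_eventually[OF eventually_mono]) simp
  qed
  show "AE r in \<mu>. norm (indicator {1 / real (Suc n)<..} r * (1 - exp (- (l * r)))) \<le> 1 - exp (- (l * r))" for n
    using AE_pos by eventually_elim (use l in \<open>simp add: indicator_def\<close>)
qed simp_all

lemma laplace_exponent_tendsto_0: "(\<lambda>k. laplace_exponent \<mu> (1 / real (Suc k))) \<longlonglongrightarrow> 0"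
proof -
  have "(\<lambda>k. \<integral>r. 1 - exp (- (1 / real (Suc k) * r)) \<partial>\<mu>) \<longlonglongrightarrow> (\<integral>r. 0 \<partial>\<mu>)"
  proof (rule integral_dominated_convergence[where w="\<lambda>r. 1 - exp (- (1 * r))"])
    show "integrable \<mu> (\<lambda>r. 1 - exp (- (1 * r)))"
      by (rule integrable_one_minus_exp) simp
    show "AE r in \<mu>. (\<lambda>k. 1 - exp (- (1 / real (Suc k) * r))) \<longlonglongrightarrow> 0"
    proof (rule AE_I2)
      fix r :: real
      have "(\<lambda>k. 1 - exp (- (1 / real (Suc k) * r))) \<longlonglongrightarrow> 1 - exp (- (0 * r))"
        using LIMSEQ_inverse_real_of_nat by (intro tendsto_intros) (simp add: inverse_eq_divide)
      then show "(\<lambda>k. 1 - exp (- (1 / real (Suc k) * r))) \<longlonglongrightarrow> 0"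
        by simp
    qed
    show "AE r in \<mu>. norm (1 - exp (- (1 / real (Suc k) * r))) \<le> 1 - exp (- (1 * r))" for k
      using AE_pos
    proof eventually_elim
      case (elim r)
      then have "r / real (Suc k) \<le> r"
        by (simp add: divide_le_eq mult_le_cancel_left1)
      then show ?case
        using elim by simp
    qed
  qed simp_all
  then show ?thesis
    by (simp add: laplace_exponent_def)
qed

lemma compound_poisson_truncation:
  assumes \<delta>: "0 < \<delta>"
  shows "\<exists>Q. nonneg_distribution Q
    \<and> (\<forall>l\<ge>0. laplace Q l = exp (- laplace_exponent (density \<mu> (indicator {\<delta><..})) l))"
proof (rule compound_poisson_exists)
  show "finite_measure (density \<mu> (indicator {\<delta><..}))"
    using emeasure_greaterThan_finite[OF \<delta>] by (intro finite_measureI) (simp add: emeasure_restricted)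
  have "{\<delta><..} \<inter> {..<0} = {}"
    using \<delta> by auto
  then show "emeasure (density \<mu> (indicator {\<delta><..})) {..<0} = 0"
    by (simp add: emeasure_restricted)
qed (simp add: sets_eq)

theorem exists_nonneg_distribution_laplace_exponent:
  assumes a: "0 \<le> a"
  shows "\<exists>\<nu>. nonneg_distribution \<nu> \<and> (\<forall>l\<ge>0. laplace \<nu> l = exp (- (a * l) - laplace_exponent \<mu> l))"
proof -
  define R where "R n = density \<mu> (indicator {1 / real (Suc n)<..})" for n
  have "\<exists>Q. nonneg_distribution Q \<and> (\<forall>l\<ge>0. laplace Q l = exp (- laplace_exponent (R n) l))" for n
    unfolding R_def by (rule compound_poisson_truncation) simp
  then obtain Q where Q: "\<And>n. nonneg_distribution (Q n)"
    and laplace_Q: "\<And>n l. 0 \<le> l \<Longrightarrow> laplace (Q n) l = exp (- laplace_exponent (R n) l)"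
    by metis
  have "\<exists>M. nonneg_distribution M \<and> (\<forall>l\<ge>0. laplace M l = exp (- laplace_exponent \<mu> l))"
  proof (rule laplace_limit_exists[OF Q])
    show "(\<lambda>n. laplace (Q n) l) \<longlonglongrightarrow> exp (- laplace_exponent \<mu> l)" if "0 \<le> l" for l
      unfolding laplace_Q[OF that] R_def by (intro tendsto_intros laplace_exponent_truncation_tendsto that)
    show "exp (- laplace_exponent \<mu> l) \<le> laplace (Q n) l" if "0 \<le> l" for n l
      unfolding laplace_Q[OF that] R_def using laplace_exponent_truncation_le[OF that] by simp
    show "(\<lambda>k. exp (- laplace_exponent \<mu> (1 / real (Suc k)))) \<longlonglongrightarrow> 1"
      using tendsto_exp[OF tendsto_minus[OF laplace_exponent_tendsto_0]] by simp
  qed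
  then obtain M where M: "nonneg_distribution M" "\<And>l. 0 \<le> l \<Longrightarrow> laplace M l = exp (- laplace_exponent \<mu> l)"
    by blast
  show ?thesis
  proof (intro exI conjI allI impI)
    show "nonneg_distribution (distr M borel (\<lambda>x. x + a))"
      by (rule nonneg_distribution_shift[OF M(1) a])
    show "laplace (distr M borel (\<lambda>x. x + a)) l = exp (- (a * l) - laplace_exponent \<mu> l)" if "0 \<le> l" for l
      using that by (simp add: laplace_shift[OF M(1)] M(2) exp_add[symmetric])
  qed
qed

end

section \<open>The exponent \<open>m\<close> of a subordinator\<close>

lemma nn_integral_exp_Icc:
  fixes s r :: real
  assumes "0 < s" "0 \<le> r"
  shows "(\<integral>\<^sup>+y. ennreal (exp (- (s * y))) * indicator {0..r} y \<partial>lborel) = ennreal ((1 - exp (- (s * r))) / s)"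
proof -
  have "(\<integral>\<^sup>+y. ennreal (exp (- (s * y))) * indicator {0..r} y \<partial>lborel)
      = ennreal (- exp (- (s * r)) / s - - exp (- (s * 0)) / s)"
  proof (rule nn_integral_FTC_Icc)
    show "((\<lambda>y. - exp (- (s * y)) / s) has_real_derivative exp (- (s * y))) (at y)" for y
      using assms by (auto intro!: derivative_eq_intros)
  qed (use assms in auto)
  then show ?thesis
    by (simp add: diff_divide_distrib)
qed

text \<open>Both sides equal the integral of \<open>exp (- s y)\<close> over the rectangle \<open>[0, r] \<times> [0, l]\<close>.\<close>

lemma nn_integral_one_minus_exp_div_swap:
  fixes l r :: real
  assumes l: "0 \<le> l" and r: "0 \<le> r"
  shows "(\<integral>\<^sup>+y. ennreal ((1 - exp (- (l * y))) / y) * indicator {0..r} y \<partial>lborel)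
       = (\<integral>\<^sup>+y. ennreal ((1 - exp (- (r * y))) / y) * indicator {0..l} y \<partial>lborel)"
proof -
  have inner: "(\<integral>\<^sup>+s. ennreal (exp (- (s * y))) * indicator {0..a} s \<partial>lborel) * indicator {0..b} y
      = ennreal ((1 - exp (- (a * y))) / y) * indicator {0..b} y"
    if "y \<noteq> 0" "0 \<le> a" for a b y :: real
  proof (cases "0 < y")
    case True
    then show ?thesis
      using nn_integral_exp_Icc[OF True \<open>0 \<le> a\<close>] by (simp add: mult.commute)
  qed (use that in \<open>auto split: split_indicator\<close>)
  define K where "K s y = ennreal (exp (- (s * y))) * indicator {0..l} s * indicator {0..r} y" for s y :: real
  have "(\<integral>\<^sup>+y. ennreal ((1 - exp (- (l * y))) / y) * indicator {0..r} y \<partial>lborel)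
      = (\<integral>\<^sup>+y. \<integral>\<^sup>+s. K s y \<partial>lborel \<partial>lborel)"
  proof (rule nn_integral_cong_AE)
    show "AE y in lborel. ennreal ((1 - exp (- (l * y))) / y) * indicator {0..r} y = (\<integral>\<^sup>+s. K s y \<partial>lborel)"
      using AE_lborel_singleton[of 0]
      by eventually_elim (simp add: K_def nn_integral_multc inner[OF _ l])
  qed
  also have "\<dots> = (\<integral>\<^sup>+s. \<integral>\<^sup>+y. K s y \<partial>lborel \<partial>lborel)"
    unfolding K_def by (rule lborel_pair.Fubini') measurable
  also have "\<dots> = (\<integral>\<^sup>+s. ennreal ((1 - exp (- (r * s))) / s) * indicator {0..l} s \<partial>lborel)"
  proof (rule nn_integral_cong_AE)
    have K_swap: "K s y = ennreal (exp (- (y * s))) * indicator {0..r} y * indicator {0..l} s" for s y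
      by (simp add: K_def mult.commute mult.left_commute)
    show "AE s in lborel. (\<integral>\<^sup>+y. K s y \<partial>lborel) = ennreal ((1 - exp (- (r * s))) / s) * indicator {0..l} s"
      using AE_lborel_singleton[of 0]
      by eventually_elim (simp add: K_swap nn_integral_multc inner[OF _ r])
  qed
  finally show ?thesis .
qed

lemma nn_integral_min_div_le:
  fixes r :: real
  shows "(\<integral>\<^sup>+y. ennreal (min 1 y / y) * indicator {0..r} y \<partial>lborel)
       \<le> ennreal (min 1 r) + ennreal (ln r) * indicator {1..} r"
proof -
  have "(\<integral>\<^sup>+y. ennreal (min 1 y / y) * indicator {0..r} y \<partial>lborel)
      \<le> (\<integral>\<^sup>+y. indicator {0..min 1 r} y + ennreal (1 / y) * indicator {1..r} y \<partial>lborel)"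
  proof (rule nn_integral_mono)
    fix y :: real
    show "ennreal (min 1 y / y) * indicator {0..r} y
        \<le> indicator {0..min 1 r} y + ennreal (1 / y) * indicator {1..r} y"
    proof (cases "0 < y \<and> y \<le> r")
      case True
      then show ?thesis
        by (cases "y \<le> 1") (auto simp: min_def intro: add_increasing add_increasing2)
    qed (auto split: split_indicator)
  qed
  also have "\<dots> = ennreal (min 1 r) + ennreal (ln r) * indicator {1..} r"
  proof -
    have "(\<integral>\<^sup>+y. indicator {0..min 1 r} y \<partial>lborel) = ennreal (min 1 r)"
      by (cases "0 \<le> r") (simp_all add: ennreal_neg)
    moreover have "(\<integral>\<^sup>+y. ennreal (1 / y) * indicator {1..r} y \<partial>lborel) = ennreal (ln r) * indicator {1..} r"
    proof (cases "1 \<le> r")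
      case True
      have "(\<integral>\<^sup>+y. ennreal (1 / y) * indicator {1..r} y \<partial>lborel) = ennreal (ln r - ln 1)"
        by (rule nn_integral_FTC_Icc) (use True in \<open>auto intro!: derivative_eq_intros\<close>)
      then show ?thesis
        using True by simp
    qed simp
    ultimately show ?thesis
      by (simp add: nn_integral_add)
  qed
  finally show ?thesis .
qed

lemma m_fun_mult: "0 < k \<Longrightarrow> m_fun (k * c) psi l = m_fun c psi l / k"
  unfolding m_fun_def set_lebesgue_integral_def
  by (simp add: integral_divide_zero[symmetric] mult.commute mult.left_commute del: integral_divide_zero)

lemma ennreal_divide_mult_indicator:
  fixes a y :: real
  assumes "0 \<le> y \<Longrightarrow> 0 \<le> a"
  shows "ennreal (1 / y) * ennreal a * indicator {0..r} y = ennreal (a / y) * indicator {0..r} y"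
  using assms by (cases "0 \<le> y") (simp_all add: ennreal_mult'[symmetric])

definition m_levy_measure :: "real measure \<Rightarrow> real \<Rightarrow> real measure" where
  "m_levy_measure M c = density lborel (\<lambda>r. ennreal (indicator {0<..} r * Pi_bar M r / (c * r)))"

lemma Pi_bar_nonneg: "0 \<le> Pi_bar M y"
  by (simp add: Pi_bar_def)

context subordinator_levy_measure
begin

lemma ennreal_Pi_bar: "0 < y \<Longrightarrow> ennreal (Pi_bar \<mu> y) = emeasure \<mu> {y<..}"
  using emeasure_greaterThan_finite by (simp add: Pi_bar_def emeasure_eq_ennreal_measure less_top)

lemma nn_integral_if_less: "(\<integral>\<^sup>+ r. (if y < r then 1 else 0) \<partial>\<mu>) = emeasure \<mu> {y<..}"
proof -
  have "(\<integral>\<^sup>+ r. (if y < r then 1 else 0) \<partial>\<mu>) = (\<integral>\<^sup>+ r. indicator {y<..} r \<partial>\<mu>)"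
    by (intro nn_integral_cong) (simp split: split_indicator)
  then show ?thesis
    by simp
qed

lemma borel_measurable_Pi_bar [measurable]: "Pi_bar \<mu> \<in> borel_measurable borel"
proof -
  have "Pi_bar \<mu> = (\<lambda>y. enn2real (\<integral>\<^sup>+ r. (if y < r then 1 else 0) \<partial>\<mu>))"
    by (simp add: fun_eq_iff nn_integral_if_less Pi_bar_def measure_def)
  then show ?thesis
    by simp
qed

lemma nn_integral_Pi_bar:
  assumes [measurable]: "f \<in> borel_measurable borel"
  shows "(\<integral>\<^sup>+y. f y * ennreal (Pi_bar \<mu> y) * indicator {0<..} y \<partial>lborel)
       = (\<integral>\<^sup>+r. \<integral>\<^sup>+y. f y * indicator {0..r} y \<partial>lborel \<partial>\<mu>)"
proof -
  interpret pair_sigma_finite lborel \<mu> ..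
  define g where "g y r = f y * indicator {0<..} y * (if y < r then 1 else 0)" for y r :: real
  have "f y * ennreal (Pi_bar \<mu> y) * indicator {0<..} y = (\<integral>\<^sup>+r. g y r \<partial>\<mu>)" for y
    by (cases "0 < y") (simp_all add: g_def ennreal_Pi_bar nn_integral_cmult nn_integral_if_less)
  then have "(\<integral>\<^sup>+y. f y * ennreal (Pi_bar \<mu> y) * indicator {0<..} y \<partial>lborel) = (\<integral>\<^sup>+y. \<integral>\<^sup>+r. g y r \<partial>\<mu> \<partial>lborel)"
    by simp
  also have "\<dots> = (\<integral>\<^sup>+r. \<integral>\<^sup>+y. g y r \<partial>lborel \<partial>\<mu>)"
    unfolding g_def by (rule Fubini'[symmetric]; measurable)
  also have "\<dots> = (\<integral>\<^sup>+r. \<integral>\<^sup>+y. f y * indicator {0..r} y \<partial>lborel \<partial>\<mu>)"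
  proof (rule nn_integral_cong, rule nn_integral_cong_AE)
    fix r :: real
    show "AE y in lborel. g y r = f y * indicator {0..r} y"
      using AE_lborel_singleton[of 0] AE_lborel_singleton[of r]
      by eventually_elim (simp add: g_def split: split_indicator)
  qed
  finally show ?thesis .
qed

lemma nn_integral_m_levy_measure:
  assumes c: "0 < c" and [measurable]: "f \<in> borel_measurable borel"
  shows "(\<integral>\<^sup>+r. f r \<partial>m_levy_measure \<mu> c)
       = ennreal (1 / c) * (\<integral>\<^sup>+r. \<integral>\<^sup>+y. ennreal (1 / y) * f y * indicator {0..r} y \<partial>lborel \<partial>\<mu>)"
proof -
  have "ennreal (indicator {0<..} y * Pi_bar \<mu> y / (c * y)) * f y
      = ennreal (1 / c) * (ennreal (1 / y) * f y * ennreal (Pi_bar \<mu> y) * indicator {0<..} y)" for y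
  proof (cases "0 < y")
    case True
    have eq: "indicator {0<..} y * Pi_bar \<mu> y / (c * y) = 1 / c * (1 / y * Pi_bar \<mu> y)"
      using True by simp
    have pos: "0 \<le> 1 / c" "0 \<le> 1 / y"
      using c True by simp_all
    have "ennreal (indicator {0<..} y * Pi_bar \<mu> y / (c * y)) * f y
        = ennreal (1 / c) * (ennreal (1 / y) * ennreal (Pi_bar \<mu> y)) * f y"
      by (simp only: eq ennreal_mult'[OF pos(1)] ennreal_mult'[OF pos(2)])
    then show ?thesis
      using True by (simp add: mult_ac)
  qed simp
  then have "(\<integral>\<^sup>+r. f r \<partial>m_levy_measure \<mu> c)
      = (\<integral>\<^sup>+y. ennreal (1 / c) * (ennreal (1 / y) * f y * ennreal (Pi_bar \<mu> y) * indicator {0<..} y) \<partial>lborel)"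
    unfolding m_levy_measure_def by (simp add: nn_integral_density)
  also have "\<dots> = ennreal (1 / c) * (\<integral>\<^sup>+r. \<integral>\<^sup>+y. ennreal (1 / y) * f y * indicator {0..r} y \<partial>lborel \<partial>\<mu>)"
    by (simp add: nn_integral_cmult nn_integral_Pi_bar)
  finally show ?thesis .
qed


lemma subordinator_levy_measure_m_levy_measure:
  assumes c: "0 < c" and log_moment: "(\<integral>\<^sup>+ r. ennreal (ln r) * indicator {1..} r \<partial>\<mu>) < \<infinity>"
  shows "subordinator_levy_measure (m_levy_measure \<mu> c)"
proof
  show "sets (m_levy_measure \<mu> c) = sets borel"
    by (simp add: m_levy_measure_def)
  have "emeasure (m_levy_measure \<mu> c) {..0}
      = (\<integral>\<^sup>+r. ennreal (indicator {0<..} r * Pi_bar \<mu> r / (c * r)) * indicator {..0} r \<partial>lborel)"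
    unfolding m_levy_measure_def by (rule emeasure_density) simp_all
  also have "\<dots> = (\<integral>\<^sup>+r. 0 \<partial>(lborel :: real measure))"
    by (intro nn_integral_cong) (simp split: split_indicator)
  finally show "emeasure (m_levy_measure \<mu> c) {..0} = 0"
    by simp
  have "(\<integral>\<^sup>+r. ennreal (min 1 r) \<partial>m_levy_measure \<mu> c)
      = ennreal (1 / c) * (\<integral>\<^sup>+r. \<integral>\<^sup>+y. ennreal (1 / y) * ennreal (min 1 y) * indicator {0..r} y \<partial>lborel \<partial>\<mu>)"
    by (rule nn_integral_m_levy_measure[OF c]) simp
  also have "\<dots> = ennreal (1 / c) * (\<integral>\<^sup>+r. \<integral>\<^sup>+y. ennreal (min 1 y / y) * indicator {0..r} y \<partial>lborel \<partial>\<mu>)"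
    by (simp only: ennreal_divide_mult_indicator)
  also have "\<dots> \<le> ennreal (1 / c) * (\<integral>\<^sup>+r. ennreal (min 1 r) + ennreal (ln r) * indicator {1..} r \<partial>\<mu>)"
    by (intro mult_left_mono nn_integral_mono nn_integral_min_div_le) simp
  also have "\<dots> < \<infinity>"
    using nn_integral_min_finite log_moment by (simp add: nn_integral_add ennreal_mult_less_top)
  finally show "(\<integral>\<^sup>+r. ennreal (min 1 r) \<partial>m_levy_measure \<mu> c) < \<infinity>" .
qed

lemma laplace_exponent_m_levy_measure:
  assumes c: "0 < c"
  shows "laplace_exponent (m_levy_measure \<mu> c) l = (LBINT r:{0<..}. (1 - exp (- l * r)) * Pi_bar \<mu> r / (c * r))"
proof -
  have "laplace_exponent (m_levy_measure \<mu> c) l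
      = (\<integral>r. indicator {0<..} r * Pi_bar \<mu> r / (c * r) * (1 - exp (- (l * r))) \<partial>lborel)"
  proof -
    have "0 \<le> indicator {0<..} r * Pi_bar \<mu> r / (c * r)" for r
      using c Pi_bar_nonneg[of \<mu> r] by (auto split: split_indicator intro!: divide_nonneg_pos)
    then show ?thesis
      unfolding laplace_exponent_def m_levy_measure_def by (subst integral_density) simp_all
  qed
  then show ?thesis
    by (simp add: set_lebesgue_integral_def mult_ac)
qed

lemma laplace_exponent_nonneg: "0 \<le> l \<Longrightarrow> 0 \<le> laplace_exponent \<mu> l"
  unfolding laplace_exponent_def using AE_pos
  by (intro integral_nonneg_AE) (auto elim!: eventually_mono)

text \<open>Fubini twice: \<open>(1 - exp (- s r)) / s\<close> and \<open>(1 - exp (- l y)) / y\<close> are both integrals of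
  \<open>exp (- s y)\<close>, and \<open>m_levy_measure\<close> integrates against the tail \<open>Pi_bar\<close>.\<close>

lemma nn_integral_laplace_exponent_div:
  assumes c: "0 < c" and l: "0 \<le> l"
  shows "(\<integral>\<^sup>+s. ennreal (laplace_exponent \<mu> s / s) * indicator {0..l} s \<partial>lborel)
       = ennreal c * (\<integral>\<^sup>+r. ennreal (1 - exp (- (l * r))) \<partial>m_levy_measure \<mu> c)"
proof -
  interpret pair_sigma_finite lborel \<mu> ..
  have div: "ennreal (1 / y) * ennreal (1 - exp (- (l * y))) * indicator {0..r} y
      = ennreal ((1 - exp (- (l * y))) / y) * indicator {0..r} y" for r y :: real
    using l by (intro ennreal_divide_mult_indicator) simp
  have "ennreal c * (\<integral>\<^sup>+r. ennreal (1 - exp (- (l * r))) \<partial>m_levy_measure \<mu> c)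
      = ennreal c * ennreal (1 / c)
        * (\<integral>\<^sup>+r. \<integral>\<^sup>+y. ennreal (1 / y) * ennreal (1 - exp (- (l * y))) * indicator {0..r} y \<partial>lborel \<partial>\<mu>)"
    by (subst nn_integral_m_levy_measure[OF c]) (simp_all add: mult.assoc)
  also have "\<dots> = (\<integral>\<^sup>+r. \<integral>\<^sup>+y. ennreal ((1 - exp (- (l * y))) / y) * indicator {0..r} y \<partial>lborel \<partial>\<mu>)"
  proof -
    have "ennreal c * ennreal (1 / c) = 1"
      using c by (simp flip: ennreal_mult)
    then show ?thesis
      by (simp only: div mult_1)
  qed
  also have "\<dots> = (\<integral>\<^sup>+r. \<integral>\<^sup>+s. ennreal ((1 - exp (- (r * s))) / s) * indicator {0..l} s \<partial>lborel \<partial>\<mu>)"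
    using AE_pos
    by (intro nn_integral_cong_AE) (auto elim!: eventually_mono intro: nn_integral_one_minus_exp_div_swap l)
  also have "\<dots> = (\<integral>\<^sup>+s. \<integral>\<^sup>+r. ennreal ((1 - exp (- (r * s))) / s) * indicator {0..l} s \<partial>\<mu> \<partial>lborel)"
    by (rule Fubini'; measurable)
  also have "\<dots> = (\<integral>\<^sup>+s. ennreal (laplace_exponent \<mu> s / s) * indicator {0..l} s \<partial>lborel)"
  proof (rule nn_integral_cong)
    fix s :: real
    show "(\<integral>\<^sup>+r. ennreal ((1 - exp (- (r * s))) / s) * indicator {0..l} s \<partial>\<mu>)
        = ennreal (laplace_exponent \<mu> s / s) * indicator {0..l} s"
    proof (cases "0 < s")
      case True
      have "ennreal ((1 - exp (- (r * s))) / s) = ennreal (1 / s) * ennreal (1 - exp (- (s * r)))" for r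
        using True by (simp add: ennreal_mult'[symmetric] mult.commute)
      then have "(\<integral>\<^sup>+r. ennreal ((1 - exp (- (r * s))) / s) \<partial>\<mu>)
          = ennreal (1 / s) * ennreal (laplace_exponent \<mu> s)"
        using True by (simp add: nn_integral_cmult nn_integral_one_minus_exp)
      then show ?thesis
        using True laplace_exponent_nonneg[of s] by (simp add: nn_integral_multc ennreal_mult'[symmetric])
    qed (auto split: split_indicator)
  qed
  finally show ?thesis ..
qed


lemma m_fun_sub_psi:
  assumes c: "0 < c" and log_moment: "(\<integral>\<^sup>+ r. ennreal (ln r) * indicator {1..} r \<partial>\<mu>) < \<infinity>"
    and l: "0 \<le> l"
  shows "m_fun c (sub_psi d \<mu>) l = - (d / c * l) - laplace_exponent (m_levy_measure \<mu> c) l"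
proof -
  interpret levy: subordinator_levy_measure "m_levy_measure \<mu> c"
    using c log_moment by (rule subordinator_levy_measure_m_levy_measure)
  define F where "F s = indicator {0..l} s * (laplace_exponent \<mu> s / s)" for s
  have F_meas [measurable]: "F \<in> borel_measurable borel"
    unfolding F_def laplace_exponent_def by measurable
  have F_nonneg: "0 \<le> F s" for s
    using laplace_exponent_nonneg[of s] by (simp add: F_def indicator_def)
  have "(\<integral>\<^sup>+s. ennreal (F s) \<partial>lborel) = (\<integral>\<^sup>+s. ennreal (laplace_exponent \<mu> s / s) * indicator {0..l} s \<partial>lborel)"
    by (intro nn_integral_cong) (simp add: F_def split: split_indicator)
  also have "\<dots> = ennreal (c * laplace_exponent (m_levy_measure \<mu> c) l)"
    using c levy.laplace_exponent_nonneg[OF l]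
    by (simp add: nn_integral_laplace_exponent_div[OF c l] levy.nn_integral_one_minus_exp[OF l] ennreal_mult)
  finally have F_nn: "(\<integral>\<^sup>+s. ennreal (F s) \<partial>lborel) = ennreal (c * laplace_exponent (m_levy_measure \<mu> c) l)" .
  then have F_int: "integrable lborel F"
    using F_nonneg by (intro integrableI_nonneg) simp_all
  have F_integral: "(\<integral>s. F s \<partial>lborel) = c * laplace_exponent (m_levy_measure \<mu> c) l"
    using F_nonneg F_nn c levy.laplace_exponent_nonneg[OF l]
    by (subst integral_eq_nn_integral) (simp_all add: F_def)
  have "m_fun c (sub_psi d \<mu>) l = (\<integral>s. indicator {0..l} s * (- (d / c)) - F s / c \<partial>lborel)"
    unfolding m_fun_def set_lebesgue_integral_def
  proof (rule integral_cong_AE)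
    show "AE s in lborel. indicator {0..l} s *\<^sub>R (sub_psi d \<mu> s / (c * s))
        = indicator {0..l} s * (- (d / c)) - F s / c"
      using AE_lborel_singleton[of 0]
      by eventually_elim (use c in \<open>simp add: sub_psi_def laplace_exponent_def F_def field_simps\<close>)
  qed (unfold sub_psi_def, measurable)
  also have "\<dots> = - (d / c * l) - laplace_exponent (m_levy_measure \<mu> c) l"
    using F_int l c by (simp add: F_integral)
  finally show ?thesis .
qed


lemma exists_Pi_bar_pos:
  assumes "emeasure \<mu> {0<..} \<noteq> 0"
  shows "\<exists>e>0. 0 < Pi_bar \<mu> e"
proof (rule ccontr)
  assume "\<not> ?thesis"
  then have "emeasure \<mu> {e<..} = 0" if "0 < e" for e
    using that ennreal_Pi_bar[OF that] Pi_bar_nonneg[of \<mu> e] by (metis ennreal_0 order_less_le)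
  then have "emeasure \<mu> (\<Union>n. {1 / real (Suc n)<..}) = 0"
    by (intro emeasure_UN_eq_0) auto
  moreover have "(\<Union>n. {1 / real (Suc n)<..}) = {0<..}"
  proof
    show "{0<..} \<subseteq> (\<Union>n. {1 / real (Suc n)<..})"
      using eventually_inverse_Suc_less eventually_happens' by fastforce
    show "(\<Union>n. {1 / real (Suc n)<..}) \<subseteq> {0<..}"
    proof
      fix x assume "x \<in> (\<Union>n. {1 / real (Suc n)<..})"
      then obtain n where "1 / real (Suc n) < x"
        by blast
      moreover have "0 < 1 / real (Suc n)"
        by simp
      ultimately show "x \<in> {0<..}"
        unfolding greaterThan_iff by linarith
    qed
  qed
  ultimately show False
    using assms by simp
qed

lemma Pi_bar_antimono:
  assumes "0 < y" "y \<le> e"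
  shows "Pi_bar \<mu> e \<le> Pi_bar \<mu> y"
proof -
  have "emeasure \<mu> {e<..} \<le> emeasure \<mu> {y<..}"
    using assms by (intro emeasure_mono) auto
  then have "ennreal (Pi_bar \<mu> e) \<le> ennreal (Pi_bar \<mu> y)"
    using assms ennreal_Pi_bar by simp
  then show ?thesis
    by (simp add: Pi_bar_nonneg)
qed

lemma m_levy_density_lower_bound:
  assumes c: "0 < c" and l: "0 < l" and y: "1 / l \<le> y" "y \<le> e"
  shows "Pi_bar \<mu> e * (1 - exp (-1)) / c * (1 / y) \<le> Pi_bar \<mu> y / (c * y) * (1 - exp (- (l * y)))"
proof -
  have "0 < 1 / l"
    using l by simp
  with y have y_pos: "0 < y"
    by linarith
  have "1 \<le> l * y"
    using y l by (simp add: field_simps)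
  then have "1 - exp (-1) \<le> 1 - exp (- (l * y))"
    by simp
  then have "Pi_bar \<mu> e * (1 - exp (-1)) \<le> Pi_bar \<mu> y * (1 - exp (- (l * y)))"
    using Pi_bar_antimono[OF y_pos y(2)] Pi_bar_nonneg by (intro mult_mono) auto
  then have "Pi_bar \<mu> e * (1 - exp (-1)) / (c * y) \<le> Pi_bar \<mu> y * (1 - exp (- (l * y))) / (c * y)"
    using c y_pos by (intro divide_right_mono) auto
  then show ?thesis
    by simp
qed

lemma laplace_exponent_m_levy_measure_ge_ln:
  assumes c: "0 < c" and log_moment: "(\<integral>\<^sup>+ r. ennreal (ln r) * indicator {1..} r \<partial>\<mu>) < \<infinity>"
    and l: "0 < l" and l_e: "1 / l \<le> e"
  shows "Pi_bar \<mu> e * (1 - exp (-1)) / c * (ln e + ln l) \<le> laplace_exponent (m_levy_measure \<mu> c) l"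
proof -
  interpret levy: subordinator_levy_measure "m_levy_measure \<mu> c"
    using c log_moment by (rule subordinator_levy_measure_m_levy_measure)
  define C where "C = Pi_bar \<mu> e * (1 - exp (-1)) / c"
  have C: "0 \<le> C"
    using c Pi_bar_nonneg by (simp add: C_def)
  have "0 < 1 / l"
    using l by simp
  then have y_pos: "0 < y" "0 \<le> y" if "1 / l \<le> y" for y
    using that by linarith+
  have bound: "ennreal C * (ennreal (1 / y) * indicator {1 / l..e} y)
      \<le> ennreal (indicator {0<..} y * Pi_bar \<mu> y / (c * y)) * ennreal (1 - exp (- (l * y)))" for y
  proof (cases "1 / l \<le> y \<and> y \<le> e")
    case True
    then have "0 \<le> Pi_bar \<mu> y / (c * y)" "0 \<le> 1 - exp (- (l * y))"
      using c l y_pos Pi_bar_nonneg[of \<mu> y] by simp_all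
    with True C y_pos show ?thesis
      using m_levy_density_lower_bound[OF c l, of y e]
      by (simp add: C_def ennreal_mult'[symmetric] ennreal_mult[symmetric] ennreal_leI)
  qed simp
  have "(\<integral>\<^sup>+y. ennreal (1 / y) * indicator {1 / l..e} y \<partial>lborel) = ennreal (ln e - ln (1 / l))"
    using l_e y_pos by (intro nn_integral_FTC_Icc) (auto intro!: derivative_eq_intros)
  then have "ennreal (C * (ln e + ln l)) = (\<integral>\<^sup>+y. ennreal C * (ennreal (1 / y) * indicator {1 / l..e} y) \<partial>lborel)"
    using C l by (simp add: nn_integral_cmult ennreal_mult' ln_div)
  also have "\<dots> \<le> (\<integral>\<^sup>+y. ennreal (indicator {0<..} y * Pi_bar \<mu> y / (c * y)) * ennreal (1 - exp (- (l * y))) \<partial>lborel)"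
    by (intro nn_integral_mono bound)
  also have "\<dots> = (\<integral>\<^sup>+y. ennreal (1 - exp (- (l * y))) \<partial>m_levy_measure \<mu> c)"
    by (simp add: m_levy_measure_def nn_integral_density)
  also have "\<dots> = ennreal (laplace_exponent (m_levy_measure \<mu> c) l)"
    using l by (simp add: levy.nn_integral_one_minus_exp)
  finally show ?thesis
    using l levy.laplace_exponent_nonneg by (simp add: C_def)
qed

lemma laplace_exponent_m_levy_measure_unbounded:
  assumes c: "0 < c" and log_moment: "(\<integral>\<^sup>+ r. ennreal (ln r) * indicator {1..} r \<partial>\<mu>) < \<infinity>"
    and nonzero: "emeasure \<mu> {0<..} \<noteq> 0"
  shows "\<exists>l\<ge>0. K \<le> laplace_exponent (m_levy_measure \<mu> c) l"
proof -
  obtain e where e: "0 < e" "0 < Pi_bar \<mu> e"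
    using exists_Pi_bar_pos[OF nonzero] by blast
  define C where "C = Pi_bar \<mu> e * (1 - exp (-1)) / c"
  have C: "0 < C"
    using e c by (simp add: C_def)
  define l where "l = exp (\<bar>K\<bar> / C) / e"
  have l: "0 < l" "1 / l \<le> e"
    using e C by (simp_all add: l_def field_simps)
  have "C * (ln e + ln l) \<le> laplace_exponent (m_levy_measure \<mu> c) l"
    unfolding C_def by (rule laplace_exponent_m_levy_measure_ge_ln[OF c log_moment l])
  moreover have "C * (ln e + ln l) = \<bar>K\<bar>"
    using e C by (simp add: l_def ln_div)
  ultimately show ?thesis
    using l by (intro exI[of _ l]) auto
qed

lemma exists_laplace_eq_exp_m_fun:
  assumes c: "0 < c" and d: "0 \<le> d"
    and log_moment: "(\<integral>\<^sup>+ r. ennreal (ln r) * indicator {1..} r \<partial>\<mu>) < \<infinity>"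
  shows "\<exists>\<nu>. nonneg_distribution \<nu> \<and> (\<forall>l\<ge>0. laplace \<nu> l = exp (m_fun c (sub_psi d \<mu>) l))"
proof -
  interpret levy: subordinator_levy_measure "m_levy_measure \<mu> c"
    using c log_moment by (rule subordinator_levy_measure_m_levy_measure)
  have "0 \<le> d / c"
    using c d by simp
  then obtain \<nu> where \<nu>: "nonneg_distribution \<nu>"
    and laplace_\<nu>: "\<And>l. 0 \<le> l \<Longrightarrow> laplace \<nu> l = exp (- (d / c * l) - laplace_exponent (m_levy_measure \<mu> c) l)"
    using levy.exists_nonneg_distribution_laplace_exponent by blast
  show ?thesis
    by (intro exI[of _ \<nu>]) (simp add: \<nu> laplace_\<nu> m_fun_sub_psi[OF c log_moment])
qed

lemma emeasure_greaterThan_eq_1_if_laplace_eq_exp_m_fun: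
  assumes c: "0 < c"
    and log_moment: "(\<integral>\<^sup>+ r. ennreal (ln r) * indicator {1..} r \<partial>\<mu>) < \<infinity>"
    and nonzero: "emeasure \<mu> {0<..} \<noteq> 0"
    and \<nu>: "nonneg_distribution \<nu>" and laplace_\<nu>: "\<forall>l\<ge>0. laplace \<nu> l = exp (m_fun c (sub_psi d \<mu>) l)"
  shows "emeasure \<nu> {d / c<..} = 1"
  using laplace_\<nu>
  by (intro emeasure_greaterThan_eq_1_if_laplace[OF \<nu> _
        laplace_exponent_m_levy_measure_unbounded[OF c log_moment nonzero]])
    (simp add: m_fun_sub_psi[OF c log_moment])

lemma laplace_eq_exp_m_fun_iff:
  assumes c: "0 < c" and d: "0 \<le> d"
    and log_moment: "(\<integral>\<^sup>+ r. ennreal (ln r) * indicator {1..} r \<partial>\<mu>) < \<infinity>"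
    and nonzero: "emeasure \<mu> {0<..} \<noteq> 0"
  shows "(prob_space \<nu> \<and> sets \<nu> = sets borel \<and> emeasure \<nu> {..0} = 0
        \<and> (\<forall>l\<ge>0. (\<integral>r. exp (- l * r) \<partial>\<nu>) = exp (m_fun c (sub_psi d \<mu>) l)))
     \<longleftrightarrow> nonneg_distribution \<nu> \<and> (\<forall>l\<ge>0. laplace \<nu> l = exp (m_fun c (sub_psi d \<mu>) l))"
    (is "?stated \<longleftrightarrow> ?law")
proof
  assume ?stated
  then show ?law
    by (simp add: nonneg_distributionI_atMost laplace_def)
next
  assume law: ?law
  then interpret prob_space \<nu>
    by (simp add: nonneg_distribution_def)
  have "emeasure \<nu> {d / c<..} = 1"
    using law by (intro emeasure_greaterThan_eq_1_if_laplace_eq_exp_m_fun[OF c log_moment nonzero]) auto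
  moreover have "space \<nu> - {d / c<..} = {..d / c}"
    using law sets_eq_imp_space_eq[of \<nu> borel] by (auto simp: nonneg_distribution_def)
  ultimately have "emeasure \<nu> {..d / c} = 0"
    using law prob_compl[of "{d / c<..}"] by (simp add: nonneg_distribution_def emeasure_eq_measure)
  moreover have "emeasure \<nu> {..0} \<le> emeasure \<nu> {..d / c}"
    using law c d by (intro emeasure_mono) (auto simp: nonneg_distribution_def)
  ultimately show ?stated
    using law by (simp add: nonneg_distribution_def laplace_def)
qed

lemma inf_divisible_if_laplace_eq_exp_m_fun:
  assumes c: "0 < c" and d: "0 \<le> d"
    and log_moment: "(\<integral>\<^sup>+ r. ennreal (ln r) * indicator {1..} r \<partial>\<mu>) < \<infinity>"
    and \<nu>: "nonneg_distribution \<nu>" and laplace_\<nu>: "\<forall>l\<ge>0. laplace \<nu> l = exp (m_fun c (sub_psi d \<mu>) l)"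
  shows "inf_divisible \<nu>"
proof (rule inf_divisible_if_laplace_roots[OF \<nu>])
  fix n :: nat assume "1 \<le> n"
  then have n: "0 < real n"
    by simp
  have "exp (m_fun (real n * c) (sub_psi d \<mu>) l) ^ n = exp (m_fun c (sub_psi d \<mu>) l)" for l
    using n by (simp add: m_fun_mult exp_of_nat_mult[symmetric])
  then show "\<exists>\<rho>. nonneg_distribution \<rho> \<and> (\<forall>l\<ge>0. laplace \<rho> l ^ n = laplace \<nu> l)"
    using exists_laplace_eq_exp_m_fun[of "real n * c" d] n c d log_moment laplace_\<nu> by auto
qed

end

theorem lemma3p3:
  fixes c d :: real and LM :: "real measure"
  assumes c_pos: "c > 0"
    and d_nonneg: "d \<ge> 0"
    and Pi_sets: "sets LM = sets borel"
    and Pi_support: "emeasure LM {..0} = 0"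
    and Pi_subord: "(\<integral>\<^sup>+ r. ennreal (min 1 r) \<partial>LM) < \<infinity>"
    and cond_L: "(\<integral>\<^sup>+ r. ennreal (ln r) * indicator {1..} r \<partial>LM) < \<infinity>"
    and Pi_nonzero: "emeasure LM {0<..} \<noteq> 0"
  shows "(\<forall>lam\<ge>0. - m_fun c (sub_psi d LM) lam
            = d / c * lam + (LBINT r:{0<..}. (1 - exp (- lam * r)) * Pi_bar LM r / (c * r)))
       \<and> (\<exists>!nu. prob_space nu \<and> sets nu = sets borel \<and> emeasure nu {..0} = 0
              \<and> (\<forall>lam\<ge>0. (\<integral> r. exp (- lam * r) \<partial>nu) = exp (m_fun c (sub_psi d LM) lam)))
       \<and> (\<forall>nu. prob_space nu \<and> sets nu = sets borel \<and> emeasure nu {..0} = 0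
              \<and> (\<forall>lam\<ge>0. (\<integral> r. exp (- lam * r) \<partial>nu) = exp (m_fun c (sub_psi d LM) lam))
              \<longrightarrow> inf_divisible nu \<and> emeasure nu {d / c<..} = 1)"
proof -
  interpret subordinator_levy_measure LM
    using Pi_sets Pi_support Pi_subord by unfold_locales
  show ?thesis
    unfolding laplace_eq_exp_m_fun_iff[OF c_pos d_nonneg cond_L Pi_nonzero]
  proof (intro conjI allI impI ex_ex1I)
    show "- m_fun c (sub_psi d LM) lam
        = d / c * lam + (LBINT r:{0<..}. (1 - exp (- lam * r)) * Pi_bar LM r / (c * r))"
      if "0 \<le> lam" for lam
      using that by (simp add: m_fun_sub_psi[OF c_pos cond_L] laplace_exponent_m_levy_measure[OF c_pos])
    show "\<exists>\<nu>. nonneg_distribution \<nu> \<and> (\<forall>l\<ge>0. laplace \<nu> l = exp (m_fun c (sub_psi d LM) l))"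
      by (rule exists_laplace_eq_exp_m_fun[OF c_pos d_nonneg cond_L])
    show "\<nu>\<^sub>1 = \<nu>\<^sub>2"
      if "nonneg_distribution \<nu>\<^sub>1 \<and> (\<forall>l\<ge>0. laplace \<nu>\<^sub>1 l = exp (m_fun c (sub_psi d LM) l))"
        and "nonneg_distribution \<nu>\<^sub>2 \<and> (\<forall>l\<ge>0. laplace \<nu>\<^sub>2 l = exp (m_fun c (sub_psi d LM) l))"
      for \<nu>\<^sub>1 \<nu>\<^sub>2
      using that by (intro laplace_unique) auto
    fix \<nu> assume "nonneg_distribution \<nu> \<and> (\<forall>l\<ge>0. laplace \<nu> l = exp (m_fun c (sub_psi d LM) l))"
    then show "inf_divisible \<nu>" and "emeasure \<nu> {d / c<..} = 1"
      using inf_divisible_if_laplace_eq_exp_m_fun[OF c_pos d_nonneg cond_L]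
        emeasure_greaterThan_eq_1_if_laplace_eq_exp_m_fun[OF c_pos cond_L Pi_nonzero] by auto
  qed
qed

end
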